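(* Let $\ell,m,n$ be positive integers with $\ell<n$, $m<n$, $\gcd(m,n)=1$, and let $\mathcal{X},\mathcal{Y},\hat{\mathcal{X}},\hat{\mathcal{Y}},\check{\mathcal{X}},\check{\mathcal{Y}}$ be the words defined in the context from $\mathcal{F}[\ell,m,n]$. Then $$\mathcal{X}\check{\mathcal{X}}=\hat{\mathcal{X}}\mathcal{X}^{\overline0},\qquad \mathcal{Y}\hat{\mathcal{X}}=\check{\mathcal{X}}\mathcal{Y}^{\overline0},\qquad \hat{\mathcal{Y}}\mathcal{X}=\mathcal{X}^{\overline0}\check{\mathcal{Y}},\qquad \check{\mathcal{Y}}\mathcal{Y}=\mathcal{Y}^{\overline0}\hat{\mathcal{Y}}.$$
   Context: For positive integers $\ell<n$, $m<n$, $\gcd(m,n)=1$, $\mathcal{S}=\mathcal{F}[\ell,m,n]$ is the $n$-periodic sequence with $\mathcal{S}_i=L$ if $im\bmod n<\ell$ and $R$ otherwise; indices are taken mod $n$; $d\in\{1,\dots,n-1\}$ is the inverse of $m$ mod $n$. Words are finite strings over $\{L,R\}$ indexed from $0$; juxtaposition is concatenation; $\mathcal{W}^{\overline0}$ is $\mathcal{W}$ with its index-$0$ symbol changed. For an integer $p$ and $q\ge1$, $\mathcal{S}[p;q]=\mathcal{S}_p\cdots\mathcal{S}_{p+q-1}$. Define $\mathcal{X}=\mathcal{S}[0;\ell d\bmod n]$, $\mathcal{Y}=\mathcal{S}_{\ell d\bmod n}\cdots\mathcal{S}_{n-1}$, $\hat{\mathcal{X}}=\mathcal{S}_0\cdots\mathcal{S}_{n-d-1}$,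 $\hat{\mathcal{Y}}=\mathcal{S}_{n-d}\cdots\mathcal{S}_{n-1}$, $\check{\mathcal{X}}=\mathcal{S}[\ell d;n-d]$ (cyclically from index $\ell d\bmod n$ to $((\ell-1)d-1)\bmod n$), $\check{\mathcal{Y}}=\mathcal{S}[(\ell-1)d;d]$ (cyclically from index $(\ell-1)d\bmod n$ to $(\ell d-1)\bmod n$). *)

theory Defs
  imports Main "HOL-Number_Theory.Cong"
begin

datatype sym = L | R

fun flip :: "sym \<Rightarrow> sym" where
  "flip L = R" | "flip R = L"

definition Fseq :: "nat \<Rightarrow> nat \<Rightarrow> nat \<Rightarrow> int \<Rightarrow> sym" where
  "Fseq l m n i = (if (i * int m) mod int n < int l then L else R)"

definition invmod :: "nat \<Rightarrow> nat \<Rightarrow> nat" where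
  "invmod m n = (THE d. d \<in> {1..<n} \<and> [m * d = 1] (mod n))"

definition seg :: "(int \<Rightarrow> sym) \<Rightarrow> int \<Rightarrow> nat \<Rightarrow> sym list" where
  "seg S p q = map (\<lambda>k. S (p + int k)) [0..<q]"

definition bar0 :: "sym list \<Rightarrow> sym list" where
  "bar0 w = w[0 := flip (w ! 0)]"

definition wX :: "nat \<Rightarrow> nat \<Rightarrow> nat \<Rightarrow> sym list" where
  "wX l m n = seg (Fseq l m n) 0 ((l * invmod m n) mod n)"
definition wY :: "nat \<Rightarrow> nat \<Rightarrow> nat \<Rightarrow> sym list" where
  "wY l m n = seg (Fseq l m n) (int ((l * invmod m n) mod n)) (n - (l * invmod m n) mod n)"
definition wXhat :: "nat \<Rightarrow> nat \<Rightarrow> nat \<Rightarrow> sym list" where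
  "wXhat l m n = seg (Fseq l m n) 0 (n - invmod m n)"
definition wYhat :: "nat \<Rightarrow> nat \<Rightarrow> nat \<Rightarrow> sym list" where
  "wYhat l m n = seg (Fseq l m n) (int (n - invmod m n)) (invmod m n)"
definition wXcheck :: "nat \<Rightarrow> nat \<Rightarrow> nat \<Rightarrow> sym list" where
  "wXcheck l m n = seg (Fseq l m n) (int (l * invmod m n)) (n - invmod m n)"
definition wYcheck :: "nat \<Rightarrow> nat \<Rightarrow> nat \<Rightarrow> sym list" where
  "wYcheck l m n = seg (Fseq l m n) ((int l - 1) * int (invmod m n)) (invmod m n)"

end

theory Submission imports Defs begin

text \<open>Multiplying an index by m turns the shift j \<mapsto> j - d into the rotation r \<mapsto> r - 1 of the
  residue r = j m mod n, and F[l,m,n] reads L exactly on the residues below l. Hence shifting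
  back by d leaves F unchanged except at the two breakpoints r = 0 and r = l, i.e. at the
  indices 0 and x = l d mod n, where the symbol flips. Within one period the words X and Y
  each start at one breakpoint and contain no other, so shifting either by -d flips exactly its
  first symbol. Each of the four identities compares two cyclic readings of the same stretch of
  the sequence, once starting at the breakpoint and once starting d positions earlier.\<close>

lemma invmod_spec:
  assumes "coprime m n" "1 < n"
  shows "invmod m n \<in> {1..<n}" "[m * invmod m n = 1] (mod n)"
proof -
  obtain y where y: "[m * y = 1] (mod n)"
    using cong_solve_coprime_nat[OF assms(1)] by auto
  define d where "d = y mod n"
  have d_cong: "[m * d = 1] (mod n)"
    using y unfolding d_def cong_def by (metis mod_mult_right_eq)
  have "d \<noteq> 0"
    using d_cong assms(2) by (intro notI) (simp add: cong_def)
  then have d_range: "d \<in> {1..<n}"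
    using assms(2) by (simp add: d_def)
  have "invmod m n = d"
    unfolding invmod_def
  proof (rule the_equality)
    fix e assume e: "e \<in> {1..<n} \<and> [m * e = 1] (mod n)"
    then have "[m * e = m * d] (mod n)"
      using d_cong by (auto intro: cong_trans cong_sym)
    then have "[e = d] (mod n)"
      using cong_mult_lcancel_nat[OF assms(1)] by simp
    then show "e = d"
      using e d_range cong_less_modulus_unique_nat by auto
  qed (use d_cong d_range in auto)
  then show "invmod m n \<in> {1..<n}" "[m * invmod m n = 1] (mod n)"
    using d_cong d_range by simp_all
qed

lemma mult_mod_eq_iff:
  fixes i j :: int
  assumes "coprime m n" "0 \<le> i" "i < int n" "0 \<le> j" "j < int n"
  shows "(i * int m) mod int n = (j * int m) mod int n \<longleftrightarrow> i = j"
proof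
  assume "(i * int m) mod int n = (j * int m) mod int n"
  then have "[i = j] (mod int n)"
    using cong_mult_rcancel[of "int m" "int n" i j] assms(1) by (simp add: cong_def)
  then show "i = j"
    using assms cong_less_imp_eq_int by blast
qed simp

lemma seg_append: "seg S p a @ seg S (p + int a) b = seg S p (a + b)"
  by (rule nth_equalityI) (auto simp: seg_def nth_append add.assoc)

lemma seg_Suc: "seg S p (Suc q) = S p # seg S (p + 1) q"
  using seg_append[of S p 1 q] by (simp add: seg_def)

lemma seg_cong_mod:
  assumes periodic: "\<And>i j. [i = j] (mod N) \<Longrightarrow> S i = S j" and "[p = p'] (mod N)"
  shows "seg S p q = seg S p' q"
  unfolding seg_def using assms by (auto intro!: periodic cong_add)

lemma seg_append_rotate:
  assumes periodic: "\<And>i j. [i = j] (mod N) \<Longrightarrow> S i = S j"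
    and "[p' = p + int a] (mod N)" "[p'' = p + int b] (mod N)"
  shows "seg S p a @ seg S p' b = seg S p b @ seg S p'' a"
proof -
  have "seg S p a @ seg S p' b = seg S p (a + b)"
    using seg_cong_mod[OF periodic assms(2)] seg_append[of S p a b] by simp
  also have "\<dots> = seg S p b @ seg S (p + int b) a"
    using seg_append[of S p b a] by (simp add: add.commute)
  finally show ?thesis
    using seg_cong_mod[OF periodic assms(3)] by simp
qed

lemma seg_shift_bar0:
  assumes shift: "\<And>j. S (j - \<delta>) = (if B j then flip (S j) else S j)"
    and "B p" and no_break: "\<And>k. 0 < k \<Longrightarrow> k < q \<Longrightarrow> \<not> B (p + int k)" and "0 < q"
  shows "seg S (p - \<delta>) q = bar0 (seg S p q)"
proof -
  obtain q' where q: "q = Suc q'"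
    using \<open>0 < q\<close> by (cases q) auto
  have "seg S (p - \<delta> + 1) q' = seg S (p + 1) q'"
    unfolding seg_def
  proof (rule map_cong[OF refl])
    fix k assume "k \<in> set [0..<q']"
    then have "\<not> B (p + 1 + int k)"
      using no_break[of "Suc k"] q by (simp add: add.assoc)
    then show "S (p - \<delta> + 1 + int k) = S (p + 1 + int k)"
      using shift[of "p + 1 + int k"] by (simp add: algebra_simps)
  qed
  then show ?thesis
    using shift[of p] \<open>B p\<close> by (simp add: q seg_Suc bar0_def)
qed

lemma Fseq_cong: "[i = j] (mod int n) \<Longrightarrow> Fseq l m n i = Fseq l m n j"
  unfolding Fseq_def cong_def by (metis mod_mult_left_eq)

lemma Fseq_diff:
  fixes d j :: int
  assumes "0 < l" "l < n" "[int m * d = 1] (mod int n)"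
  shows "Fseq l m n (j - d) =
    (if (j * int m) mod int n \<in> {0, int l} then flip (Fseq l m n j) else Fseq l m n j)"
proof -
  define r where "r = (j * int m) mod int n"
  have "[(j - d) * int m = j * int m - 1] (mod int n)"
    using assms(3) by (metis cong_diff cong_refl left_diff_distrib mult.commute)
  then have "((j - d) * int m) mod int n = (r - 1) mod int n"
    unfolding r_def cong_def by (metis mod_diff_left_eq)
  moreover have "0 \<le> r" "r < int n"
    using assms(2) by (simp_all add: r_def)
  ultimately have "((j - d) * int m) mod int n = (if r = 0 then int n - 1 else r - 1)"
    using assms(1,2) by (auto simp: zmod_zminus1_eq_if)
  then show ?thesis
    using assms(1,2) unfolding Fseq_def r_def[symmetric] by auto
qed

lemma Fseq_breakpoint_iff:
  fixes j :: int
  assumes "coprime m n" "x < n" "(int x * int m) mod int n = int l" "0 \<le> j" "j < int n"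
  shows "(j * int m) mod int n \<in> {0, int l} \<longleftrightarrow> j = 0 \<or> j = int x"
  using mult_mod_eq_iff[OF assms(1,4,5), of 0] mult_mod_eq_iff[OF assms(1,4,5), of "int x"]
    assms by auto

lemma invmod_residue:
  assumes "0 < l" "l < n" "coprime m n"
  shows "(int ((l * invmod m n) mod n) * int m) mod int n = int l"
proof -
  have "[m * invmod m n = 1] (mod n)"
    using invmod_spec assms by simp
  then have "[l * invmod m n * m = l] (mod n)"
    using cong_scalar_left[of "m * invmod m n" 1 n l] by (simp add: ac_simps)
  then have "(l * invmod m n mod n * m) mod n = l"
    using assms(2) by (simp add: cong_def mod_mult_left_eq)
  then show ?thesis
    by (metis of_nat_mult zmod_int)
qed

context
  fixes l m n :: nat
  assumes pos: "0 < l" and "l < n" and cop: "coprime m n"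
begin

private abbreviation "d \<equiv> invmod m n"
private abbreviation "x \<equiv> (l * invmod m n) mod n"

private lemma x_range: "0 < x" "x < n"
  using invmod_residue[OF pos \<open>l < n\<close> cop] pos \<open>l < n\<close> by (auto intro: Nat.gr0I)

private lemma Fseq_diff_invmod:
  "Fseq l m n (j - int d) =
    (if (j * int m) mod int n \<in> {0, int l} then flip (Fseq l m n j) else Fseq l m n j)"
  using invmod_spec[OF cop] pos \<open>l < n\<close>
  by (intro Fseq_diff) (auto simp: cong_int_iff[symmetric])

private lemmas breakpoints =
  Fseq_breakpoint_iff[OF cop x_range(2) invmod_residue[OF pos \<open>l < n\<close> cop]]

private lemmas shift_bar0 =
  seg_shift_bar0[where B = "\<lambda>j. (j * int m) mod int n \<in> {0, int l}", OF Fseq_diff_invmod]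

lemma bar0_wX: "bar0 (wX l m n) = seg (Fseq l m n) (- int d) x"
proof -
  have "seg (Fseq l m n) (0 - int d) x = bar0 (seg (Fseq l m n) 0 x)"
  proof (rule shift_bar0)
    fix k assume "0 < k" "k < x"
    then show "\<not> ((0 + int k) * int m) mod int n \<in> {0, int l}"
      using breakpoints[of "int k"] x_range by simp
  qed (use x_range in simp_all)
  then show ?thesis
    by (simp add: wX_def)
qed

lemma bar0_wY: "bar0 (wY l m n) = seg (Fseq l m n) (int x - int d) (n - x)"
proof -
  have "seg (Fseq l m n) (int x - int d) (n - x) = bar0 (seg (Fseq l m n) (int x) (n - x))"
  proof (rule shift_bar0)
    fix k assume "0 < k" "k < n - x"
    then show "\<not> ((int x + int k) * int m) mod int n \<in> {0, int l}"
      using breakpoints[of "int x + int k"] x_range by simp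
  qed (use x_range invmod_residue[OF pos \<open>l < n\<close> cop] in simp_all)
  then show ?thesis
    by (simp add: wY_def)
qed

end

theorem proposition3p4:
  fixes l m n :: nat
  assumes "0 < l" "0 < m" "l < n" "m < n" "coprime m n"
  shows "wX l m n @ wXcheck l m n = wXhat l m n @ bar0 (wX l m n) \<and>
    wY l m n @ wXhat l m n = wXcheck l m n @ bar0 (wY l m n) \<and>
    wYhat l m n @ wX l m n = bar0 (wX l m n) @ wYcheck l m n \<and>
    wYcheck l m n @ wY l m n = bar0 (wY l m n) @ wYhat l m n"
proof -
  define d x S where "d = invmod m n" and "x = (l * d) mod n" and "S = Fseq l m n"
  have "d < n" "x < n"
    using invmod_spec[of m n] assms by (auto simp: d_def x_def)
  have x_cong: "[int (l * d) = int x] (mod int n)"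
    by (simp add: x_def cong_def zmod_int)
  note periodic = Fseq_cong[where l = l and m = m and n = n, folded S_def]
  note rotate = seg_append_rotate[OF periodic]
  have words: "wX l m n = seg S 0 x" "wY l m n = seg S (int x) (n - x)"
    "wXhat l m n = seg S 0 (n - d)" "wXcheck l m n = seg S (int x) (n - d)"
    "wYhat l m n = seg S (- int d) d" "wYcheck l m n = seg S (int x - int d) d"
    unfolding wX_def wY_def wXhat_def wXcheck_def wYhat_def wYcheck_def
      d_def[symmetric] x_def[symmetric] S_def[symmetric]
    using \<open>d < n\<close> x_cong
    by (auto intro!: seg_cong_mod[OF periodic] cong_diff
        simp: cong_def of_nat_diff algebra_simps)
  have bars: "bar0 (wX l m n) = seg S (- int d) x"
    "bar0 (wY l m n) = seg S (int x - int d) (n - x)"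
    using bar0_wX[OF assms(1,3,5)] bar0_wY[OF assms(1,3,5)] by (simp_all add: d_def x_def S_def)
  show ?thesis
    unfolding bars unfolding words using \<open>d < n\<close> \<open>x < n\<close>
    by (intro conjI rotate) (auto simp: cong_iff_dvd_diff of_nat_diff algebra_simps)
qed

end
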